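(* Let $M$ have constant sectional curvature $c$ and let $\omega=b_0\alpha_0+b_1\alpha_1+b_2\alpha_2+b_3\,d\theta$ with constant coefficients $b_i\in\mathbb{R}$. Then: (i) $\omega\wedge\omega=2e^{1234}$ if and only if $b_0b_2-b_1^2-b_3^2=1$; (ii) for $\omega$ satisfying (i), the 3-form $\varphi=\theta\wedge\omega$ is a calibration on $T^1M$ if and only if $b_0=b_2=\pm1$ and $b_1=b_3=0$; (iii) for such $\omega=\pm(\alpha_0+\alpha_2)$, the 2-form $\omega$ is closed if and only if $c=1$.
   Context: Let $(M,g)$ be an oriented Riemannian 3-manifold with Levi-Civita connection $\nabla$ and unit tangent sphere bundle $\pi:T^1M\to M$, endowed with (the restriction of) the Sasaki metric $g^S$: the metric on $TM$ for which the splitting $T(TM)=H^\nabla\oplus V$ into the $\nabla$-horizontal and vertical subspaces is orthogonal and both $d\pi|_{H^\nabla}$ and the canonical identification of $V$ with $T_{\pi(u)}M$ are isometries. Let $B$ be the mirror map on $T(TM)$ sending the horizontal lift of a vector to its vertical lift and vertical vectors to $0$. An adapted orthonormal frame at $u\in T^1M$ is $e_0,\dots,e_4$, where $e_0$ is the geodesic spray (the horizontal lift of $u$), $e_1,e_2$ are horizontal lifts of an orthonormal basis of $u^\perp\subset T_{\pi(u)}M$ with $(u,d\pi e_1,d\pi e_2)$ positively oriented, $e_3=Be_1$, $e_4=Be_2$; $T^1M$ is oriented by $e^0\wedge\cdots\wedge e^4$. With $e^0,\dots,e^4$ the dual coframe and $e^{ij}=e^i\wedge e^j$, $e^{1234}=e^1\wedge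 e^2\wedge e^3\wedge e^4$, set $\theta=e^0$ and the globally defined 2-forms $\alpha_0=e^{12}$, $\alpha_1=e^{14}-e^{23}$, $\alpha_2=e^{34}$; then $d\theta=e^{31}+e^{42}$. If $M$ has constant sectional curvature $c$, then $d\alpha_0=\theta\wedge\alpha_1$, $d\alpha_1=2\theta\wedge\alpha_2-2c\,\theta\wedge\alpha_0$, $d\alpha_2=-c\,\theta\wedge\alpha_1$. A calibration is a closed differential form of comass one, i.e. its value on every unit simple $k$-vector is at most $1$, with the value $1$ attained (at least as a supremum) at every point. *)

theory Defs
  imports "HOL-Analysis.Analysis"
begin

text \<open>Pointwise model: the tangent space of T^1M at a point, identified with real^5
  via the adapted orthonormal frame e_0,...,e_4 (index i of type 5 = frame index i).\<close>

type_synonym vec5 = "real ^ 5"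

definition theta :: "vec5 \<Rightarrow> real" where
  "theta u = u $ 0"

definition ee :: "5 \<Rightarrow> 5 \<Rightarrow> vec5 \<Rightarrow> vec5 \<Rightarrow> real" where
  "ee i j u v = u $ i * v $ j - u $ j * v $ i"

definition alpha0 :: "vec5 \<Rightarrow> vec5 \<Rightarrow> real" where
  "alpha0 = ee 1 2"

definition alpha1 :: "vec5 \<Rightarrow> vec5 \<Rightarrow> real" where
  "alpha1 u v = ee 1 4 u v - ee 2 3 u v"

definition alpha2 :: "vec5 \<Rightarrow> vec5 \<Rightarrow> real" where
  "alpha2 = ee 3 4"

definition dtheta :: "vec5 \<Rightarrow> vec5 \<Rightarrow> real" where
  "dtheta u v = ee 3 1 u v + ee 4 2 u v"

definition omega :: "real \<Rightarrow> real \<Rightarrow> real \<Rightarrow> real \<Rightarrow> vec5 \<Rightarrow> vec5 \<Rightarrow> real" where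
  "omega b0 b1 b2 b3 u v =
     b0 * alpha0 u v + b1 * alpha1 u v + b2 * alpha2 u v + b3 * dtheta u v"

definition wedge12 :: "(vec5 \<Rightarrow> real) \<Rightarrow> (vec5 \<Rightarrow> vec5 \<Rightarrow> real) \<Rightarrow> vec5 \<Rightarrow> vec5 \<Rightarrow> vec5 \<Rightarrow> real" where
  "wedge12 a b u v w = a u * b v w - a v * b u w + a w * b u v"

definition wedge13 :: "(vec5 \<Rightarrow> real) \<Rightarrow> (vec5 \<Rightarrow> vec5 \<Rightarrow> vec5 \<Rightarrow> real)
    \<Rightarrow> vec5 \<Rightarrow> vec5 \<Rightarrow> vec5 \<Rightarrow> vec5 \<Rightarrow> real" where
  "wedge13 a b x y z w = a x * b y z w - a y * b x z w + a z * b x y w - a w * b x y z"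

definition wedge22 :: "(vec5 \<Rightarrow> vec5 \<Rightarrow> real) \<Rightarrow> (vec5 \<Rightarrow> vec5 \<Rightarrow> real)
    \<Rightarrow> vec5 \<Rightarrow> vec5 \<Rightarrow> vec5 \<Rightarrow> vec5 \<Rightarrow> real" where
  "wedge22 a b x y z w =
     a x y * b z w - a x z * b y w + a x w * b y z
   + a y z * b x w - a y w * b x z + a z w * b x y"

definition e1234 :: "vec5 \<Rightarrow> vec5 \<Rightarrow> vec5 \<Rightarrow> vec5 \<Rightarrow> real" where
  "e1234 = wedge22 (ee 1 2) (ee 3 4)"

text \<open>Exterior derivative of the constant-coefficient form omega, computed from the
  structure equations for constant curvature c given in the context
  (d alpha0 = theta\<and>alpha1, d alpha1 = 2 theta\<and>alpha2 - 2c theta\<and>alpha0,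
   d alpha2 = -c theta\<and>alpha1, d(d theta) = 0).\<close>

definition d_omega :: "real \<Rightarrow> real \<Rightarrow> real \<Rightarrow> real \<Rightarrow> real \<Rightarrow> vec5 \<Rightarrow> vec5 \<Rightarrow> vec5 \<Rightarrow> real" where
  "d_omega c b0 b1 b2 b3 =
     wedge12 theta (\<lambda>u v. b0 * alpha1 u v + b1 * (2 * alpha2 u v - 2 * c * alpha0 u v)
                          + b2 * (- c * alpha1 u v))"

text \<open>phi = theta \<and> omega, and d phi = d theta \<and> omega - theta \<and> d omega (Leibniz rule).\<close>

definition phi :: "real \<Rightarrow> real \<Rightarrow> real \<Rightarrow> real \<Rightarrow> vec5 \<Rightarrow> vec5 \<Rightarrow> vec5 \<Rightarrow> real" where
  "phi b0 b1 b2 b3 = wedge12 theta (omega b0 b1 b2 b3)"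

definition d_phi :: "real \<Rightarrow> real \<Rightarrow> real \<Rightarrow> real \<Rightarrow> real \<Rightarrow> vec5 \<Rightarrow> vec5 \<Rightarrow> vec5 \<Rightarrow> vec5 \<Rightarrow> real" where
  "d_phi c b0 b1 b2 b3 x y z w =
     wedge22 dtheta (omega b0 b1 b2 b3) x y z w - wedge13 theta (d_omega c b0 b1 b2 b3) x y z w"

definition orthonormal3 :: "vec5 \<Rightarrow> vec5 \<Rightarrow> vec5 \<Rightarrow> bool" where
  "orthonormal3 u v w \<longleftrightarrow> u \<bullet> u = 1 \<and> v \<bullet> v = 1 \<and> w \<bullet> w = 1
      \<and> u \<bullet> v = 0 \<and> u \<bullet> w = 0 \<and> v \<bullet> w = 0"

definition comass_one3 :: "(vec5 \<Rightarrow> vec5 \<Rightarrow> vec5 \<Rightarrow> real) \<Rightarrow> bool" where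
  "comass_one3 f \<longleftrightarrow> (\<forall>u v w. orthonormal3 u v w \<longrightarrow> f u v w \<le> 1)
      \<and> Sup {f u v w | u v w. orthonormal3 u v w} = 1"

definition is_calibration_phi :: "real \<Rightarrow> real \<Rightarrow> real \<Rightarrow> real \<Rightarrow> real \<Rightarrow> bool" where
  "is_calibration_phi c b0 b1 b2 b3 \<longleftrightarrow>
     (\<forall>x y z w. d_phi c b0 b1 b2 b3 x y z w = 0) \<and> comass_one3 (phi b0 b1 b2 b3)"

end

theory Submission
  imports Defs
begin

text \<open>For \<open>\<omega> = b\<^sub>0\<alpha>\<^sub>0 + b\<^sub>1\<alpha>\<^sub>1 + b\<^sub>2\<alpha>\<^sub>2 + b\<^sub>3d\<theta>\<close> one has \<open>\<omega>\<and>\<omega> = 2(b\<^sub>0b\<^sub>2 - b\<^sub>1\<^sup>2 - b\<^sub>3\<^sup>2)e\<^sup>1\<^sup>2\<^sup>3\<^sup>4\<close>,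
  which gives (i). Evaluating \<open>\<phi> = \<theta>\<and>\<omega>\<close> on the frames \<open>(e\<^sub>0,e\<^sub>1,e\<^sub>2)\<close> and \<open>(e\<^sub>0,e\<^sub>3,e\<^sub>4)\<close>
  bounds \<open>|b\<^sub>0|, |b\<^sub>2| \<le> 1\<close>, which together with \<open>b\<^sub>0b\<^sub>2 = 1 + b\<^sub>1\<^sup>2 + b\<^sub>3\<^sup>2\<close> forces
  \<open>b\<^sub>0 = b\<^sub>2 = \<plusminus>1\<close> and \<open>b\<^sub>1 = b\<^sub>3 = 0\<close>. Conversely, for \<open>\<phi> = \<theta>\<and>(\<alpha>\<^sub>0 + \<alpha>\<^sub>2)\<close> the value
  \<open>\<phi>(u,v,w)\<close> is \<open>\<langle>Y(u,v), w\<rangle>\<close> for the vector \<open>Y(u,v)\<close> dual to \<open>\<phi>(u,v,\<cdot>)\<close>, whose squared length is \<open>|u\<and>v|\<^sup>2\<close>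
  minus a sum of squares, so Cauchy-Schwarz gives comass one; \<open>d\<phi> = 0\<close> is a direct
  computation. Finally \<open>d(\<alpha>\<^sub>0 + \<alpha>\<^sub>2) = (1 - c) \<theta>\<and>\<alpha>\<^sub>1\<close>, which gives (iii).\<close>

lemma exhaust_5:
  fixes x :: 5
  shows "x = 0 \<or> x = 1 \<or> x = 2 \<or> x = 3 \<or> x = 4"
proof (induct x)
  case (of_int z)
  then have "z = 0 \<or> z = 1 \<or> z = 2 \<or> z = 3 \<or> z = 4" by fastforce
  then show ?case by auto
qed

lemma UNIV_5: "UNIV = {0, 1, 2, 3, 4::5}"
  using exhaust_5 by auto

lemma sum_5: "sum f (UNIV::5 set) = f 0 + f 1 + f 2 + f 3 + f 4"
  unfolding UNIV_5 by (simp add: ac_simps)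

lemma inner_vec5:
  "(u::vec5) \<bullet> v = u $ 0 * v $ 0 + u $ 1 * v $ 1 + u $ 2 * v $ 2 + u $ 3 * v $ 3 + u $ 4 * v $ 4"
  by (simp add: inner_vec_def sum_5)

lemma axis_one_nth: "axis i (1::real) $ j = (if j = i then 1 else 0)"
  by (simp add: axis_def)

lemma orthonormal3_axis:
  assumes "i \<noteq> j" "i \<noteq> k" "j \<noteq> k"
  shows "orthonormal3 (axis i 1) (axis j 1) (axis k 1)"
  using assms by (simp add: orthonormal3_def inner_axis_axis)

lemmas form_defs = phi_def wedge12_def wedge13_def wedge22_def omega_def theta_def alpha0_def
  alpha1_def alpha2_def dtheta_def ee_def e1234_def d_omega_def d_phi_def

lemma omega_wedge_omega:
  "wedge22 (omega b0 b1 b2 b3) (omega b0 b1 b2 b3) x y z w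
     = 2 * (b0 * b2 - b1\<^sup>2 - b3\<^sup>2) * e1234 x y z w"
  unfolding form_defs by algebra

lemma e1234_axis: "e1234 (axis 1 1) (axis 2 1) (axis 3 1) (axis 4 1) = 1"
  by (simp add: form_defs axis_one_nth)

lemma d_phi_symmetric_eq_0: "d_phi c s 0 s 0 x y z w = 0"
  unfolding form_defs by algebra

lemma d_omega_symmetric: "d_omega c s 0 s 0 x y z = s * (1 - c) * wedge12 theta alpha1 x y z"
  unfolding form_defs by algebra

lemma theta_wedge_alpha1_axis: "wedge12 theta alpha1 (axis 0 1) (axis 1 1) (axis 4 1) = 1"
  by (simp add: form_defs axis_one_nth)

lemma phi_axis_012: "phi b0 b1 b2 b3 (axis 0 1) (axis 1 1) (axis 2 1) = b0"
  and phi_axis_021: "phi b0 b1 b2 b3 (axis 0 1) (axis 2 1) (axis 1 1) = - b0"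
  and phi_axis_034: "phi b0 b1 b2 b3 (axis 0 1) (axis 3 1) (axis 4 1) = b2"
  and phi_axis_043: "phi b0 b1 b2 b3 (axis 0 1) (axis 4 1) (axis 3 1) = - b2"
  by (simp_all add: form_defs axis_one_nth)

lemma phi_symmetric_scale: "phi s 0 s 0 u v w = s * phi 1 0 1 0 u v w"
  unfolding form_defs by algebra

definition phi_dual :: "vec5 \<Rightarrow> vec5 \<Rightarrow> vec5" where
  "phi_dual u v = (\<chi> i. phi 1 0 1 0 u v (axis i 1))"

lemma phi_dual_nth:
  "phi_dual u v $ 0 = u $ 1 * v $ 2 - u $ 2 * v $ 1 + u $ 3 * v $ 4 - u $ 4 * v $ 3"
  "phi_dual u v $ 1 = v $ 0 * u $ 2 - u $ 0 * v $ 2"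
  "phi_dual u v $ 2 = u $ 0 * v $ 1 - v $ 0 * u $ 1"
  "phi_dual u v $ 3 = v $ 0 * u $ 4 - u $ 0 * v $ 4"
  "phi_dual u v $ 4 = u $ 0 * v $ 3 - v $ 0 * u $ 3"
  by (simp_all add: phi_dual_def form_defs axis_one_nth)

lemma phi_eq_inner_phi_dual: "phi 1 0 1 0 u v w = phi_dual u v \<bullet> w"
  unfolding inner_vec5 phi_dual_nth by (simp add: form_defs) algebra

text \<open>The two squares are the components of \<open>u\<and>v\<close> along \<open>e\<^sub>1\<and>e\<^sub>3 - e\<^sub>2\<and>e\<^sub>4\<close> and
  \<open>e\<^sub>1\<and>e\<^sub>4 + e\<^sub>2\<and>e\<^sub>3\<close>, which \<open>\<phi>\<close> does not see; the identity holds because \<open>u\<and>v\<close> is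
  decomposable (Pluecker relation).\<close>

lemma phi_dual_inner_self:
  "phi_dual u v \<bullet> phi_dual u v
     + (u $ 1 * v $ 3 - u $ 3 * v $ 1 - u $ 2 * v $ 4 + u $ 4 * v $ 2)\<^sup>2
     + (u $ 1 * v $ 4 - u $ 4 * v $ 1 + u $ 2 * v $ 3 - u $ 3 * v $ 2)\<^sup>2
   = (u \<bullet> u) * (v \<bullet> v) - (u \<bullet> v)\<^sup>2"
  unfolding inner_vec5 phi_dual_nth by (simp add: power2_eq_square algebra_simps)

lemma phi_dual_inner_self_le: "phi_dual u v \<bullet> phi_dual u v \<le> (u \<bullet> u) * (v \<bullet> v) - (u \<bullet> v)\<^sup>2"
  using phi_dual_inner_self[of u v] by (smt (verit) zero_le_power2)

lemma abs_phi_le_1: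
  assumes "orthonormal3 u v w"
  shows "\<bar>phi 1 0 1 0 u v w\<bar> \<le> 1"
proof -
  have "(phi_dual u v \<bullet> w)\<^sup>2 \<le> (phi_dual u v \<bullet> phi_dual u v) * (w \<bullet> w)"
    by (rule Cauchy_Schwarz_ineq)
  also have "\<dots> \<le> 1"
    using phi_dual_inner_self_le[of u v] assms by (simp add: orthonormal3_def)
  finally have "(phi 1 0 1 0 u v w)\<^sup>2 \<le> 1"
    by (simp only: phi_eq_inner_phi_dual)
  then show ?thesis
    by (simp only: abs_square_le_1)
qed

lemma comass_one3_phi_symmetric:
  assumes s: "s = 1 \<or> s = -1"
  shows "comass_one3 (phi s 0 s 0)"
  unfolding comass_one3_def
proof
  have "phi s 0 s 0 u v w \<le> 1" if "orthonormal3 u v w" for u v w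
    using abs_phi_le_1[OF that] phi_symmetric_scale[of s u v w] s by auto
  then show bound: "\<forall>u v w. orthonormal3 u v w \<longrightarrow> phi s 0 s 0 u v w \<le> 1"
    by blast
  obtain u v w where "orthonormal3 u v w" "phi s 0 s 0 u v w = 1"
  proof (cases "s = 1")
    case True
    then show ?thesis
      using that[OF orthonormal3_axis[of 0 1 2]] by (simp add: phi_axis_012)
  next
    case False
    then show ?thesis
      using that[OF orthonormal3_axis[of 0 2 1]] s by (simp add: phi_axis_021)
  qed
  then have "1 \<in> {phi s 0 s 0 u v w | u v w. orthonormal3 u v w}"
    by (metis (mono_tags, lifting) mem_Collect_eq)
  then show "Sup {phi s 0 s 0 u v w | u v w. orthonormal3 u v w} = 1"
    by (rule cSup_eq_maximum) (use bound in blast)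
qed

lemma comass_one3_phi_coeff_bounds:
  assumes "comass_one3 (phi b0 b1 b2 b3)"
  shows "\<bar>b0\<bar> \<le> 1" "\<bar>b2\<bar> \<le> 1"
proof -
  have le: "phi b0 b1 b2 b3 u v w \<le> 1" if "orthonormal3 u v w" for u v w
    using assms that unfolding comass_one3_def by blast
  show "\<bar>b0\<bar> \<le> 1"
    using le[OF orthonormal3_axis[of 0 1 2]] le[OF orthonormal3_axis[of 0 2 1]]
    by (simp add: phi_axis_012 phi_axis_021)
  show "\<bar>b2\<bar> \<le> 1"
    using le[OF orthonormal3_axis[of 0 3 4]] le[OF orthonormal3_axis[of 0 4 3]]
    by (simp add: phi_axis_034 phi_axis_043)
qed

lemma coeffs_eq_unit_if_bounded:
  fixes b0 b1 b2 b3 :: real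
  assumes b0: "\<bar>b0\<bar> \<le> 1" and b2: "\<bar>b2\<bar> \<le> 1" and det: "b0 * b2 - b1\<^sup>2 - b3\<^sup>2 = 1"
  shows "b0 = b2 \<and> (b0 = 1 \<or> b0 = -1) \<and> b1 = 0 \<and> b3 = 0"
proof -
  have "\<bar>b0\<bar> * \<bar>b2\<bar> \<le> 1"
    using b0 b2 by (simp add: mult_le_one)
  then have "b1\<^sup>2 + b3\<^sup>2 \<le> 0"
    using det abs_ge_self[of "b0 * b2"] by (simp add: abs_mult)
  then have b13: "b1 = 0" "b3 = 0"
    by (simp_all add: add_nonneg_eq_0_iff sum_power2_le_zero_iff)
  then have prod: "b0 * b2 = 1"
    using det by simp
  then have "\<bar>b0\<bar> * \<bar>b2\<bar> = 1"
    by (simp add: abs_mult[symmetric])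
  then have "\<bar>b0\<bar> = 1" "\<bar>b2\<bar> = 1"
    using b0 b2 mult_left_le[of "\<bar>b2\<bar>" "\<bar>b0\<bar>"] mult_right_le_one_le[of "\<bar>b0\<bar>" "\<bar>b2\<bar>"]
    by auto
  with prod b13 show ?thesis
    by (auto simp: abs_if split: if_splits)
qed

lemma omega_wedge_omega_eq_2_e1234_iff:
  "(\<forall>x y z w. wedge22 (omega b0 b1 b2 b3) (omega b0 b1 b2 b3) x y z w = 2 * e1234 x y z w)
     \<longleftrightarrow> b0 * b2 - b1\<^sup>2 - b3\<^sup>2 = 1"
proof
  assume "\<forall>x y z w. wedge22 (omega b0 b1 b2 b3) (omega b0 b1 b2 b3) x y z w = 2 * e1234 x y z w"
  from this[rule_format, of "axis 1 1" "axis 2 1" "axis 3 1" "axis 4 1"]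
  show "b0 * b2 - b1\<^sup>2 - b3\<^sup>2 = 1"
    by (simp add: omega_wedge_omega e1234_axis)
qed (simp add: omega_wedge_omega)

lemma is_calibration_phi_iff:
  assumes "b0 * b2 - b1\<^sup>2 - b3\<^sup>2 = 1"
  shows "is_calibration_phi c b0 b1 b2 b3 \<longleftrightarrow> b0 = b2 \<and> (b0 = 1 \<or> b0 = -1) \<and> b1 = 0 \<and> b3 = 0"
proof
  assume "is_calibration_phi c b0 b1 b2 b3"
  then have "comass_one3 (phi b0 b1 b2 b3)"
    by (simp add: is_calibration_phi_def)
  from comass_one3_phi_coeff_bounds[OF this] assms
  show "b0 = b2 \<and> (b0 = 1 \<or> b0 = -1) \<and> b1 = 0 \<and> b3 = 0"
    by (rule coeffs_eq_unit_if_bounded)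
next
  assume "b0 = b2 \<and> (b0 = 1 \<or> b0 = -1) \<and> b1 = 0 \<and> b3 = 0"
  then have "b2 = b0" "b1 = 0" "b3 = 0" and s: "b0 = 1 \<or> b0 = -1"
    by auto
  then show "is_calibration_phi c b0 b1 b2 b3"
    using comass_one3_phi_symmetric[OF s] d_phi_symmetric_eq_0[of c b0]
    by (simp add: is_calibration_phi_def)
qed

lemma d_omega_symmetric_eq_0_iff:
  assumes "s = 1 \<or> s = -1"
  shows "(\<forall>x y z. d_omega c s 0 s 0 x y z = 0) \<longleftrightarrow> c = 1"
proof
  assume "\<forall>x y z. d_omega c s 0 s 0 x y z = 0"
  from this[rule_format, of "axis 0 1" "axis 1 1" "axis 4 1"]
  show "c = 1"
    using assms by (auto simp: d_omega_symmetric theta_wedge_alpha1_axis)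
qed (simp add: d_omega_symmetric)

theorem proposition2p3:
  fixes c b0 b1 b2 b3 :: real
  shows "((\<forall>x y z w. wedge22 (omega b0 b1 b2 b3) (omega b0 b1 b2 b3) x y z w = 2 * e1234 x y z w)
           \<longleftrightarrow> b0 * b2 - b1\<^sup>2 - b3\<^sup>2 = 1)
    \<and> (b0 * b2 - b1\<^sup>2 - b3\<^sup>2 = 1 \<longrightarrow>
           (is_calibration_phi c b0 b1 b2 b3
              \<longleftrightarrow> (b0 = b2 \<and> (b0 = 1 \<or> b0 = -1) \<and> b1 = 0 \<and> b3 = 0)))
    \<and> (\<forall>s::real. (s = 1 \<or> s = -1) \<longrightarrow>
           ((\<forall>x y z. d_omega c s 0 s 0 x y z = 0) \<longleftrightarrow> c = 1))"
  by (simp add: omega_wedge_omega_eq_2_e1234_iff is_calibration_phi_iff d_omega_symmetric_eq_0_iff)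

end
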